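(* Let $\varepsilon>0$ and $d\in\mathbb R$ with $d\ne0$ and $\varepsilon\ell d<2r_0$. Then \[ -\varepsilon^{-1}\Big(\sigma_0\big(\varepsilon\tfrac\ell2d\big)-1\Big)\Big(3\sigma_0\big(\varepsilon\tfrac\ell2d\big)-1\Big)\,d>0 . \]
   Context: $\ell>0$, $r_0=\frac4{27}$. For $r<r_0$, $\sigma_0(r)$ is the largest real root of $\sigma^3-\sigma^2+r=0$ (the real branch with $\sigma_0(0)=1$, written in the paper by Cardano's formula $\sigma_0(r)=\frac13(1+C_-(r)+C_+(r))$, $C_\pm(r)=\frac32(-4r+2r_0\pm4\sqrt{r(r-r_0)})^{1/3}$). The left-hand side is $\mathfrak C_{\varepsilon,0}[d]\,d$ where $\mathfrak C_{\varepsilon,0}$ is the (non dispersive) Cummins operator. *)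

theory Defs
  imports Complex_Main
begin

definition r0 :: real where "r0 = 4 / 27"

text \<open>sigma0 r: the largest real root of s^3 - s^2 + r = 0 (meaningful for r < r0).\<close>
definition sigma0 :: "real \<Rightarrow> real" where
  "sigma0 r = Max {s :: real. s ^ 3 - s ^ 2 + r = 0}"

end

theory Submission
  imports Defs "HOL-Computational_Algebra.Polynomial"
begin

(* With f s = s^3 - s^2 + r: for 0 < r < r0, f (2/3) = r - r0 < 0 < r = f 1 and f > 0 on [1, oo),
   so sigma0 r lies in [2/3, 1); for r < 0, f 1 = r < 0 < f (1 - r), so sigma0 r > 1.
   Hence (sigma0 r - 1) (3 sigma0 r - 1) has the sign opposite to r, and r = eps (l/2) d has the
   sign of d. *)

lemma finite_cubic_roots: "finite {s :: real. s ^ 3 - s ^ 2 + r = 0}"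
proof -
  have "{s :: real. s ^ 3 - s ^ 2 + r = 0} = {s. poly [:r, 0, -1, 1:] s = 0}"
    by (auto simp: algebra_simps power2_eq_square power3_eq_cube)
  moreover have "finite {s. poly [:r, 0, -1, (1::real):] s = 0}"
    by (rule poly_roots_finite) simp
  ultimately show ?thesis by simp
qed

lemma cubic_root_le_sigma0:
  fixes t r :: real
  assumes "t ^ 3 - t ^ 2 + r = 0"
  shows "t \<le> sigma0 r"
  unfolding sigma0_def using finite_cubic_roots assms by simp

lemma sigma0_is_root:
  fixes t r :: real
  assumes "t ^ 3 - t ^ 2 + r = 0"
  shows "sigma0 r ^ 3 - sigma0 r ^ 2 + r = 0"
proof -
  have "{s :: real. s ^ 3 - s ^ 2 + r = 0} \<noteq> {}" using assms by blast
  then have "sigma0 r \<in> {s :: real. s ^ 3 - s ^ 2 + r = 0}"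
    unfolding sigma0_def by (rule Max_in[OF finite_cubic_roots])
  then show ?thesis by simp
qed

lemma cubic_root_between:
  fixes a b r :: real
  assumes "a \<le> b" and "a ^ 3 - a ^ 2 + r \<le> 0" and "0 \<le> b ^ 3 - b ^ 2 + r"
  shows "\<exists>t. a \<le> t \<and> t \<le> b \<and> t ^ 3 - t ^ 2 + r = 0"
proof -
  have "\<forall>x. isCont (\<lambda>x. x ^ 3 - x ^ 2 + r) x" by (intro allI continuous_intros)
  then show ?thesis using IVT[of "\<lambda>x. x ^ 3 - x ^ 2 + r" a 0 b] assms by auto
qed

lemma sigma0_pos_bounds:
  fixes r :: real
  assumes "0 < r" and "r < r0"
  shows "2/3 \<le> sigma0 r" and "sigma0 r < 1"
proof -
  have "(2/3) ^ 3 - (2/3) ^ 2 + r \<le> (0::real)" using assms(2) by (simp add: r0_def power3_eq_cube power2_eq_square)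
  moreover have "0 \<le> (1::real) ^ 3 - 1 ^ 2 + r" using assms(1) by simp
  ultimately obtain t :: real where "2/3 \<le> t" and root: "t ^ 3 - t ^ 2 + r = 0"
    using cubic_root_between[of "2/3" 1 r] by auto
  then show "2/3 \<le> sigma0 r" using cubic_root_le_sigma0 by fastforce
  show "sigma0 r < 1"
  proof (rule ccontr)
    assume "\<not> sigma0 r < 1"
    then have "0 \<le> sigma0 r ^ 2 * (sigma0 r - 1)" by simp
    then have "0 < sigma0 r ^ 3 - sigma0 r ^ 2 + r"
      using assms(1) by (simp add: algebra_simps power3_eq_cube power2_eq_square)
    then show False using sigma0_is_root[OF root] by simp
  qed
qed

lemma sigma0_neg_gt_one:
  fixes r :: real
  assumes "r < 0"
  shows "1 < sigma0 r"
proof -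
  have "(1 - r) ^ 3 - (1 - r) ^ 2 + r = - r * ((1 - r) ^ 2 - 1)"
    by (simp add: algebra_simps power3_eq_cube power2_eq_square)
  moreover have "1 < (1 - r) ^ 2" using assms by (simp add: one_less_power)
  ultimately have "0 \<le> (1 - r) ^ 3 - (1 - r) ^ 2 + r"
    using assms by (simp add: mult_nonpos_nonneg)
  then obtain t where "1 \<le> t" and root: "t ^ 3 - t ^ 2 + r = 0"
    using cubic_root_between[of 1 "1 - r" r] assms by auto
  moreover have "t \<noteq> 1" using root assms by auto
  ultimately show ?thesis using cubic_root_le_sigma0[OF root] by simp
qed

lemma sigma0_factors_sign:
  fixes r :: real
  assumes "r \<noteq> 0" and "r < r0"
  shows "(sigma0 r - 1) * (3 * sigma0 r - 1) * r < 0"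
proof (cases "0 < r")
  case True
  then have "(sigma0 r - 1) * (3 * sigma0 r - 1) < 0"
    using sigma0_pos_bounds[OF True assms(2)] by (simp add: mult_neg_pos)
  then show ?thesis using True by (simp add: mult_neg_pos)
next
  case False
  then have "r < 0" using assms(1) by simp
  then have "0 < (sigma0 r - 1) * (3 * sigma0 r - 1)" using sigma0_neg_gt_one[OF \<open>r < 0\<close>] by simp
  then show ?thesis using \<open>r < 0\<close> by (simp add: mult_pos_neg)
qed

theorem lemma4p13:
  fixes l eps d :: real
  assumes "l > 0" and "eps > 0" and "d \<noteq> 0" and "eps * l * d < 2 * r0"
  shows "- (1 / eps) * (sigma0 (eps * (l / 2) * d) - 1)
           * (3 * sigma0 (eps * (l / 2) * d) - 1) * d > 0"
proof -
  define r where "r = eps * (l / 2) * d"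
  define p where "p = (sigma0 r - 1) * (3 * sigma0 r - 1)"
  have "r \<noteq> 0" and "r < r0" using assms by (auto simp: r_def)
  then have "p * r < 0" unfolding p_def by (rule sigma0_factors_sign)
  then have "eps * (l / 2) * (p * d) < 0" by (simp add: r_def ac_simps)
  then have "p * d < 0" using assms(1,2) by (simp add: mult_less_0_iff)
  then have "0 < - (p * d / eps)" using assms(2) by (simp add: divide_neg_pos)
  then show ?thesis by (simp add: p_def r_def)
qed

end
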